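(* Let $R$ be a ring and $n$ a positive integer. If every proper ideal of $R$ is weakly $n$-absorbing, then $\mathrm{Jac}(R)^{n+1}=0$, and so $\mathrm{Jac}(R)=\mathrm{Nil}(R)$.
   Context: All rings are commutative with $1\neq0$. A proper ideal $I$ of $R$ is weakly $n$-absorbing if whenever $0\neq a_1\cdots a_{n+1}\in I$ with $a_1,\dots,a_{n+1}\in R$, there are $n$ of the $a_i$'s whose product is in $I$. $\mathrm{Jac}(R)$ is the Jacobson radical (intersection of all maximal ideals) and $\mathrm{Nil}(R)$ the ideal of nilpotent elements. *)

theory Defs
  imports "HOL-Algebra.Algebra"
begin

definition weakly_n_absorbing :: "('a, 'b) ring_scheme \<Rightarrow> nat \<Rightarrow> 'a set \<Rightarrow> bool" where
  "weakly_n_absorbing R n I \<longleftrightarrow> ideal I R \<and> I \<noteq> carrier R \<and>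
     (\<forall>a. a \<in> {..n} \<rightarrow> carrier R \<longrightarrow>
        finprod R a {..n} \<noteq> \<zero>\<^bsub>R\<^esub> \<longrightarrow> finprod R a {..n} \<in> I \<longrightarrow>
        (\<exists>i\<le>n. finprod R a ({..n} - {i}) \<in> I))"

definition jacobson :: "('a, 'b) ring_scheme \<Rightarrow> 'a set" where
  "jacobson R = carrier R \<inter> \<Inter> {M. maximalideal M R}"

definition nilrad :: "('a, 'b) ring_scheme \<Rightarrow> 'a set" where
  "nilrad R = {x \<in> carrier R. \<exists>k::nat. x [^]\<^bsub>R\<^esub> k = \<zero>\<^bsub>R\<^esub>}"

fun ideal_pow :: "('a, 'b) ring_scheme \<Rightarrow> 'a set \<Rightarrow> nat \<Rightarrow> 'a set" where
  "ideal_pow R I 0 = carrier R"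
| "ideal_pow R I (Suc k) = ideal_prod R I (ideal_pow R I k)"

end

theory Submission
  imports Defs
begin

text \<open>Let \<open>a\<^sub>0, \<dots>, a\<^sub>n\<close> lie in the Jacobson radical \<open>J\<close> with product \<open>p \<noteq> 0\<close>. The
  principal ideal \<open>(p)\<close> is proper, so by weak \<open>n\<close>-absorption the product \<open>q\<close> of all \<open>a\<^sub>j\<close> with \<open>j \<noteq> i\<close>
  lies in \<open>(p)\<close> for some \<open>i\<close>, say \<open>q = x p = x a\<^sub>i q\<close>. Then \<open>(1 - x a\<^sub>i) q = 0\<close> with \<open>1 - x a\<^sub>i\<close> a unit, so \<open>q = 0\<close> and
  \<open>p = 0\<close>. Hence all \<open>(n+1)\<close>-fold products of elements of \<open>J\<close> vanish, so \<open>J\<^sup>n\<^sup>+\<^sup>1 = 0\<close> and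
  \<open>J \<subseteq> Nil(R)\<close>; the converse inclusion holds in every commutative ring.\<close>

fun prods :: "('a, 'b) ring_scheme \<Rightarrow> 'a set \<Rightarrow> nat \<Rightarrow> 'a set" where
  "prods R S 0 = {\<one>\<^bsub>R\<^esub>}"
| "prods R S (Suc m) = {s \<otimes>\<^bsub>R\<^esub> p | s p. s \<in> S \<and> p \<in> prods R S m}"

lemma jacobson_subset_carrier: "jacobson R \<subseteq> carrier R"
  unfolding jacobson_def by blast

context cring
begin

lemma exists_maximalideal_superset:
  assumes I: "ideal I R" and proper: "I \<noteq> carrier R"
  shows "\<exists>M. maximalideal M R \<and> I \<subseteq> M"
proof -
  let ?A = "{K. ideal K R \<and> I \<subseteq> K \<and> \<one> \<notin> K}"
  have "\<exists>M\<in>?A. \<forall>K\<in>?A. M \<subseteq> K \<longrightarrow> K = M"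
  proof (rule subset_Zorn_nonempty)
    show "?A \<noteq> {}" using I proper ideal.one_imp_carrier by blast
  next
    fix C assume C: "C \<noteq> {}" "subset.chain ?A C"
    have "subset.chain {K. ideal K R} C"
      using C(2) unfolding pred_on.chain_def by blast
    from chain_Union_is_ideal[OF this] C(1) have "ideal (\<Union>C) R" by simp
    with C show "\<Union>C \<in> ?A" unfolding pred_on.chain_def by blast
  qed
  then obtain M where M: "M \<in> ?A" and M_max: "\<forall>K\<in>?A. M \<subseteq> K \<longrightarrow> K = M" by blast
  have "maximalideal M R"
  proof (rule maximalidealI)
    show "ideal M R" "carrier R \<noteq> M" using M by auto
    fix K assume K: "ideal K R" "M \<subseteq> K" "K \<subseteq> carrier R"
    show "K = M \<or> K = carrier R"
      using K M M_max ideal.one_imp_carrier[OF K(1)] by blast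
  qed
  with M show ?thesis by blast
qed

lemma one_minus_jacobson_Units:
  assumes y: "y \<in> jacobson R" and z: "z \<in> carrier R"
  shows "\<one> \<ominus> z \<otimes> y \<in> Units R"
proof (rule ccontr)
  define u where "u = \<one> \<ominus> z \<otimes> y"
  assume "u \<notin> Units R"
  have y_carr: "y \<in> carrier R" using y jacobson_subset_carrier[of R] by blast
  then have u_carr: "u \<in> carrier R" unfolding u_def using z by simp
  with \<open>u \<notin> Units R\<close> have "PIdl u \<noteq> carrier R"
    using ideal_eq_carrier_iff by blast
  then obtain M where M: "maximalideal M R" "PIdl u \<subseteq> M"
    using exists_maximalideal_superset cgenideal_ideal[OF u_carr] by blast
  interpret maximalideal M R by fact
  have "u \<in> M" using M(2) cgenideal_self[OF u_carr] by blast
  moreover have "z \<otimes> y \<in> M" using y M(1) z I_l_closed unfolding jacobson_def by blast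
  ultimately have "u \<oplus> z \<otimes> y \<in> M" by (rule a_closed)
  moreover have "u \<oplus> z \<otimes> y = \<one>"
    unfolding u_def using y_carr z by (simp add: a_minus_def add.m_assoc l_neg)
  ultimately show False using one_imp_carrier I_notcarr by simp
qed

lemma jacobson_fixpoint_eq_zero:
  assumes y: "y \<in> jacobson R" and x: "x \<in> carrier R" and q: "q \<in> carrier R"
    and fixed: "q = x \<otimes> y \<otimes> q"
  shows "q = \<zero>"
proof -
  have y_carr: "y \<in> carrier R" using y jacobson_subset_carrier[of R] by blast
  let ?u = "\<one> \<ominus> x \<otimes> y"
  have u: "?u \<in> Units R" using one_minus_jacobson_Units[OF y x] .
  have "?u \<otimes> q = q \<ominus> x \<otimes> y \<otimes> q"
    using x y_carr q by (simp add: a_minus_def l_distr l_minus)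
  also have "\<dots> = \<zero>" using fixed q by (metis r_right_minus_eq)
  also have "\<dots> = ?u \<otimes> \<zero>" using Units_closed[OF u] by simp
  finally show ?thesis using u q by simp
qed

lemma finprod_remove:
  fixes n :: nat
  assumes a: "a \<in> {..n} \<rightarrow> carrier R" and i: "i \<le> n"
  shows "finprod R a {..n} = a i \<otimes> finprod R a ({..n} - {i})"
proof -
  have "{..n} = insert i ({..n} - {i})" using i by auto
  then have "finprod R a {..n} = finprod R a (insert i ({..n} - {i}))" by simp
  also have "\<dots> = a i \<otimes> finprod R a ({..n} - {i})"
    using a i by (intro finprod_insert) auto
  finally show ?thesis .
qed

lemma finprod_jacobson_eq_zero:
  fixes n :: nat
  assumes weakly_absorbing: "\<forall>I. ideal I R \<and> I \<noteq> carrier R \<longrightarrow> weakly_n_absorbing R n I"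
    and a: "a \<in> {..n} \<rightarrow> jacobson R"
  shows "finprod R a {..n} = \<zero>"
proof (rule ccontr)
  define p where "p = finprod R a {..n}"
  define q where "q i = finprod R a ({..n} - {i})" for i
  assume "finprod R a {..n} \<noteq> \<zero>"
  then have "p \<noteq> \<zero>" unfolding p_def .
  have a_carr: "a \<in> {..n} \<rightarrow> carrier R" using a jacobson_subset_carrier[of R] by auto
  have a_i_carr: "a i \<in> carrier R" if "i \<le> n" for i using a_carr that by auto
  have p_carr: "p \<in> carrier R" unfolding p_def using a_carr by simp
  have q_carr: "q i \<in> carrier R" for i unfolding q_def using a_carr by (auto intro: finprod_closed)
  have p_eq: "p = a i \<otimes> q i" if "i \<le> n" for i
    unfolding p_def q_def using finprod_remove[OF a_carr that] .
  have "p \<notin> Units R"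
  proof
    assume "p \<in> Units R"
    have "inv p \<otimes> q 0 \<otimes> a 0 \<otimes> \<one> = inv p \<otimes> (a 0 \<otimes> q 0)"
      using a_i_carr[of 0] q_carr[of 0] Units_inv_closed[OF \<open>p \<in> Units R\<close>] by (simp add: m_ac)
    also have "\<dots> = \<one>" using p_eq[of 0] \<open>p \<in> Units R\<close> by simp
    finally have "\<one> = inv p \<otimes> q 0 \<otimes> a 0 \<otimes> \<one>" by simp
    then have "\<one> = \<zero>"
      using \<open>p \<in> Units R\<close> a q_carr by (intro jacobson_fixpoint_eq_zero) auto
    then show False using \<open>p \<noteq> \<zero>\<close> p_carr r_one r_null by metis
  qed
  then have "weakly_n_absorbing R n (PIdl p)"
    using weakly_absorbing cgenideal_ideal[OF p_carr] ideal_eq_carrier_iff[OF p_carr] by blast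
  then obtain i where i: "i \<le> n" and "q i \<in> PIdl p"
    using a_carr \<open>p \<noteq> \<zero>\<close> cgenideal_self[OF p_carr]
    unfolding weakly_n_absorbing_def p_def q_def by blast
  then obtain x where x: "x \<in> carrier R" and "q i = x \<otimes> p" unfolding cgenideal_def by blast
  then have "q i = x \<otimes> a i \<otimes> q i" using p_eq[OF i] a_i_carr[OF i] q_carr by (simp add: m_assoc)
  then have "q i = \<zero>" using a i x q_carr by (intro jacobson_fixpoint_eq_zero) auto
  then show False using \<open>p \<noteq> \<zero>\<close> p_eq[OF i] a_i_carr[OF i] by simp
qed

lemma prods_carrier: "S \<subseteq> carrier R \<Longrightarrow> prods R S m \<subseteq> carrier R"
  by (induction m) auto

lemma prods_imp_finprod:
  assumes S: "S \<subseteq> carrier R" and p: "p \<in> prods R S m"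
  shows "\<exists>a \<in> {..<m} \<rightarrow> S. p = finprod R a {..<m}"
  using p
proof (induction m arbitrary: p)
  case 0 then show ?case by auto
next
  case (Suc m)
  from Suc.prems obtain s p' where s: "s \<in> S" and "p' \<in> prods R S m" and "p = s \<otimes> p'"
    by auto
  with Suc.IH obtain a where a: "a \<in> {..<m} \<rightarrow> S" and p: "p = s \<otimes> finprod R a {..<m}"
    by blast
  have a_upd: "a(m := s) \<in> {..<Suc m} \<rightarrow> S" using a s by (auto simp: less_Suc_eq)
  have "finprod R a {..<m} = finprod R (a(m := s)) {..<m}"
    using a S by (intro finprod_cong) (auto simp: Pi_iff)
  then have "p = finprod R (a(m := s)) {..<Suc m}"
    using p a_upd S unfolding lessThan_Suc by (subst finprod_insert) (auto simp: Pi_iff)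
  with a_upd show ?case by blast
qed

lemma nat_pow_in_prods:
  assumes "x \<in> S" "S \<subseteq> carrier R"
  shows "x [^] m \<in> prods R S m"
proof (induction m)
  case (Suc m)
  have "x [^] Suc m = x \<otimes> x [^] m" using assms nat_pow_Suc2 by blast
  with Suc assms(1) show ?case by auto
qed simp

lemma ideal_pow_carrier: "S \<subseteq> carrier R \<Longrightarrow> ideal_pow R S k \<subseteq> carrier R"
proof (induction k)
  case (Suc k)
  show ?case
  proof
    fix x assume "x \<in> ideal_pow R S (Suc k)"
    then have "x \<in> ideal_prod R S (ideal_pow R S k)" by simp
    then show "x \<in> carrier R" using Suc by (induction rule: ideal_prod.induct) auto
  qed
qed simp

lemma ideal_pow_mult_prods_eq_zero:
  assumes S: "S \<subseteq> carrier R" and vanish: "prods R S (k + m) \<subseteq> {\<zero>}"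
    and x: "x \<in> ideal_pow R S k" and p: "p \<in> prods R S m"
  shows "x \<otimes> p = \<zero>"
  using vanish x p
proof (induction k arbitrary: x m p)
  case 0 then show ?case by auto
next
  case (Suc k)
  have p_carr: "p \<in> carrier R" using Suc.prems(3) prods_carrier[OF S] by blast
  have "x \<in> ideal_prod R S (ideal_pow R S k)" using Suc.prems(2) by simp
  then show ?case
  proof (induction x rule: ideal_prod.induct)
    case (prod s y)
    have "s \<otimes> p \<in> prods R S (Suc m)" using prod(1) Suc.prems(3) by auto
    then have "y \<otimes> (s \<otimes> p) = \<zero>" using Suc.IH[of "Suc m"] Suc.prems(1) prod(2) by simp
    moreover have "y \<in> carrier R" using ideal_pow_carrier[OF S] prod(2) by blast
    moreover have "s \<in> carrier R" using S prod(1) by blast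
    ultimately show ?case using p_carr by (simp add: m_ac)
  next
    case (sum s1 s2)
    have "ideal_prod R S (ideal_pow R S k) \<subseteq> carrier R"
      using ideal_pow_carrier[OF S, of "Suc k"] by simp
    then show ?case using sum p_carr by (simp add: subsetD l_distr)
  qed
qed

lemma zero_in_ideal_pow:
  assumes "\<zero> \<in> S"
  shows "\<zero> \<in> ideal_pow R S k"
proof (induction k)
  case (Suc k)
  have "\<zero> \<otimes> \<zero> \<in> ideal_prod R S (ideal_pow R S k)" using assms Suc by (rule ideal_prod.prod)
  then show ?case by simp
qed simp

lemma ideal_pow_eq_zeroI:
  assumes "S \<subseteq> carrier R" "\<zero> \<in> S" "prods R S k \<subseteq> {\<zero>}"
  shows "ideal_pow R S k = {\<zero>}"
proof -
  have "x = \<zero>" if x: "x \<in> ideal_pow R S k" for x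
  proof -
    have "x \<otimes> \<one> = \<zero>" using ideal_pow_mult_prods_eq_zero[of S k 0 x \<one>] assms x by simp
    moreover have "x \<in> carrier R" using ideal_pow_carrier[OF assms(1)] x by blast
    ultimately show ?thesis by simp
  qed
  with zero_in_ideal_pow[OF assms(2)] show ?thesis by blast
qed

lemma zero_in_jacobson: "\<zero> \<in> jacobson R"
  unfolding jacobson_def
  by (auto intro: additive_subgroup.zero_closed ideal.axioms(1) maximalideal.axioms(1))

lemma (in primeideal) nat_pow_mem_imp_mem:
  fixes k :: nat
  assumes "x \<in> carrier R" "x [^] k \<in> I"
  shows "x \<in> I"
  using assms(2)
proof (induction k)
  case 0 then show ?case using one_imp_carrier I_notcarr by simp
next
  case (Suc k)
  then show ?case using I_prime[of "x [^] k" x] nat_pow_closed[OF assms(1)] assms(1) by auto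
qed

lemma nilrad_subset_jacobson: "nilrad R \<subseteq> jacobson R"
proof
  fix x assume "x \<in> nilrad R"
  then obtain k where x: "x \<in> carrier R" and "x [^] (k::nat) = \<zero>" unfolding nilrad_def by blast
  have "x \<in> M" if "maximalideal M R" for M
  proof -
    interpret primeideal M R using maximalideal_prime[OF that] .
    have "x [^] k \<in> M"
      using \<open>x [^] k = \<zero>\<close> additive_subgroup.zero_closed[OF ideal.axioms(1)[OF is_ideal]] by simp
    with x show ?thesis by (rule nat_pow_mem_imp_mem)
  qed
  with x show "x \<in> jacobson R" unfolding jacobson_def by blast
qed

end

theorem mainTheorem8:
  fixes R (structure) and n :: nat
  assumes "cring R" and "\<one>\<^bsub>R\<^esub> \<noteq> \<zero>\<^bsub>R\<^esub>" and "n > 0"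
    and "\<forall>I. ideal I R \<and> I \<noteq> carrier R \<longrightarrow> weakly_n_absorbing R n I"
  shows "ideal_pow R (jacobson R) (n + 1) = {\<zero>\<^bsub>R\<^esub>} \<and> jacobson R = nilrad R"
proof -
  interpret cring R by fact
  let ?J = "jacobson R"
  note J_carr = jacobson_subset_carrier[of R]
  have vanish: "prods R ?J (Suc n) \<subseteq> {\<zero>}"
  proof
    fix p assume "p \<in> prods R ?J (Suc n)"
    then obtain a where "a \<in> {..<Suc n} \<rightarrow> ?J" "p = finprod R a {..<Suc n}"
      using prods_imp_finprod[OF J_carr] by blast
    then have "a \<in> {..n} \<rightarrow> ?J" "p = finprod R a {..n}" unfolding lessThan_Suc_atMost .
    then show "p \<in> {\<zero>}" using finprod_jacobson_eq_zero assms(4) by blast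
  qed
  have "ideal_pow R ?J (n + 1) = {\<zero>}"
    using ideal_pow_eq_zeroI[OF J_carr zero_in_jacobson vanish] by simp
  moreover have "?J \<subseteq> nilrad R"
    using nat_pow_in_prods[OF _ J_carr, of _ "Suc n"] vanish J_carr unfolding nilrad_def by blast
  ultimately show ?thesis using nilrad_subset_jacobson by blast
qed

end
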